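(* Let $W=(W(t))_{t\in[0,1]}$ be a standard Wiener process (Brownian motion) on $[0,1]$, and for natural $n$ let $x_n:=\sum_{k=1}^{n-1} W\big(\tfrac kn\big)$ and $y_n:=x_{n+1}-x_n$. Then, as $s\to\infty$ through the natural numbers, the distribution of the random variable $y_{4s}-y_{2s}$ converges to the centered normal distribution with variance $1/4$.
   Context: A standard Wiener process on $[0,1]$ is a centered Gaussian process with $W(0)=0$ and covariance $\mathbb{E}\,W(u)W(v)=\min(u,v)$ for $u,v\in[0,1]$. *)

theory Defs
  imports "HOL-Probability.Probability"
begin

definition centered_gaussian_rv :: "'a measure \<Rightarrow> ('a \<Rightarrow> real) \<Rightarrow> real \<Rightarrow> bool" where
  "centered_gaussian_rv M X v \<longleftrightarrow>
     X \<in> borel_measurable M \<and> 0 \<le> v \<and>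
     distr M borel X = (if v = 0 then return borel 0
                        else density lborel (\<lambda>x. ennreal (normal_density 0 (sqrt v) x)))"

text \<open>Standard Wiener process on [0,1]: a centered Gaussian process (every finite
 linear combination of its values is centered Gaussian) with W(0) = 0 and
 covariance E W(u) W(v) = min u v.\<close>
definition standard_wiener :: "'a measure \<Rightarrow> (real \<Rightarrow> 'a \<Rightarrow> real) \<Rightarrow> bool" where
  "standard_wiener M W \<longleftrightarrow>
     prob_space M \<and>
     (\<forall>t\<in>{0..1}. W t \<in> borel_measurable M) \<and>
     (AE \<omega> in M. W 0 \<omega> = 0) \<and>
     (\<forall>(n::nat) (t::nat \<Rightarrow> real) (c::nat \<Rightarrow> real). (\<forall>i<n. t i \<in> {0..1}) \<longrightarrow>
        centered_gaussian_rv M (\<lambda>\<omega>. \<Sum>i<n. c i * W (t i) \<omega>)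
          (\<Sum>i<n. \<Sum>j<n. c i * c j * min (t i) (t j)))"

definition wiener_x :: "(real \<Rightarrow> 'a \<Rightarrow> real) \<Rightarrow> nat \<Rightarrow> 'a \<Rightarrow> real" where
  "wiener_x W n \<omega> = (\<Sum>k=1..n-1. W (real k / real n) \<omega>)"

definition wiener_y :: "(real \<Rightarrow> 'a \<Rightarrow> real) \<Rightarrow> nat \<Rightarrow> 'a \<Rightarrow> real" where
  "wiener_y W n \<omega> = wiener_x W (n + 1) \<omega> - wiener_x W n \<omega>"

end

theory Submission
  imports Defs "HOL-Real_Asymp.Real_Asymp"
begin

text \<open>Each \<open>x n\<close> is a finite linear combination of values of the Gaussian process \<open>W\<close>,
  hence so is \<open>y (4s) - y (2s) = x (4s+1) - x (4s) - x (2s+1) + x (2s)\<close>, which is therefore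
  centred Gaussian, with variance a signed sum of covariances \<open>E x(a) x(b)\<close>. In the double
  sum giving such a covariance the inner sum over \<open>l\<close> splits at \<open>l = \<lfloor>k b / a\<rfloor>\<close>, which for
  the ten pairs \<open>(a, b)\<close> that occur is linear in \<open>k\<close> (piecewise so for \<open>(2s+1, 4s)\<close>); so all
  of them reduce to sums of quadratic polynomials, and the variance is
  \<open>s (4s+3) / (2 (2s+1) (4s+1))\<close>, which tends to \<open>1/4\<close>. Centred Gaussian laws whose variances
  converge also converge weakly: after rescaling to the standard normal law this is dominated
  convergence.\<close>

text \<open>The covariance of \<open>wiener_x W a\<close> and \<open>wiener_x W b\<close>, by bilinearity from
  \<open>E W(u) W(v) = min u v\<close>.\<close>
definition wiener_x_cov :: "nat \<Rightarrow> nat \<Rightarrow> real" where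
  "wiener_x_cov a b = (\<Sum>k=1..a-1. \<Sum>l=1..b-1. min (real k / real a) (real l / real b))"

lemma wiener_x_cov_commute: "wiener_x_cov a b = wiener_x_cov b a"
  unfolding wiener_x_cov_def by (subst sum.swap) (simp add: min.commute)

lemma sum_of_nat_atLeast1: "(\<Sum>k=1..n. real k) = real n * (real n + 1) / 2"
  by (induction n) (auto simp: field_simps)

lemma sum_of_nat_squares_atLeast1:
  "(\<Sum>k=1..n. real k ^ 2) = real n * (real n + 1) * (2 * real n + 1) / 6"
  by (induction n) (auto simp: field_simps power2_eq_square)

lemma sum_quadratic_atLeast1:
  "(\<Sum>k=1..n. \<alpha> + \<beta> * real k + \<gamma> * real k ^ 2) =
     \<alpha> * real n + \<beta> * real n * (real n + 1) / 2
       + \<gamma> * real n * (real n + 1) * (2 * real n + 1) / 6"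
proof -
  have "(\<Sum>k=1..n. \<alpha> + \<beta> * real k + \<gamma> * real k ^ 2) =
          (\<Sum>k=1..n. \<alpha>) + \<beta> * (\<Sum>k=1..n. real k) + \<gamma> * (\<Sum>k=1..n. real k ^ 2)"
    by (simp only: sum.distrib sum_distrib_left)
  then show ?thesis
    unfolding sum_of_nat_atLeast1 sum_of_nat_squares_atLeast1 by simp
qed

lemma sum_min_fraction_row:
  fixes a b k m :: nat
  assumes "0 < a" "0 < b" "m < b"
    and floor: "real m * real a \<le> real k * real b" "real k * real b < (real m + 1) * real a"
  shows "(\<Sum>l=1..b-1. min (real k / real a) (real l / real b)) =
           real m * (real m + 1) / (2 * real b) + real k / real a * (real b - 1 - real m)"
proof -
  have below: "real l / real b \<le> real k / real a" if "l \<le> m" for l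
  proof -
    have "real l * real a \<le> real k * real b"
      using floor(1) that by (meson of_nat_0_le_iff of_nat_le_iff order_trans mult_right_mono)
    then show ?thesis using assms(1,2) by (simp add: field_simps)
  qed
  have above: "real k / real a \<le> real l / real b" if "m < l" for l
  proof -
    have "real m + 1 \<le> real l" using that by linarith
    then have "real k * real b < real l * real a"
      using floor(2) by (meson of_nat_0_le_iff less_le_trans mult_right_mono)
    then show ?thesis using assms(1,2) by (simp add: field_simps)
  qed
  have "{1..b-1} = {1..m} \<union> {m+1..b-1}" using assms by auto
  then have "(\<Sum>l=1..b-1. min (real k / real a) (real l / real b)) =
      (\<Sum>l=1..m. min (real k / real a) (real l / real b))
      + (\<Sum>l=m+1..b-1. min (real k / real a) (real l / real b))"
    by (simp add: sum.union_disjoint)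
  also have "\<dots> = (\<Sum>l=1..m. real l / real b) + (\<Sum>l=m+1..b-1. real k / real a)"
    using below above
    by (intro arg_cong2[where f = "(+)"] sum.cong refl min.absorb2 min.absorb1) auto
  also have "\<dots> = (\<Sum>l=1..m. real l) / real b + (\<Sum>l=m+1..b-1. real k / real a)"
    by (simp add: sum_divide_distrib)
  also have "\<dots> = real m * (real m + 1) / (2 * real b) + real k / real a * (real b - 1 - real m)"
    using assms unfolding sum_of_nat_atLeast1 by (simp add: of_nat_diff)
  finally show ?thesis .
qed

lemma wiener_x_cov_eq_sum_rows:
  fixes m :: "nat \<Rightarrow> nat"
  assumes "0 < a" "0 < b"
    and floor: "\<And>k. k \<in> {1..a-1} \<Longrightarrow>
      m k < b \<and> real (m k) * real a \<le> real k * real b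
        \<and> real k * real b < (real (m k) + 1) * real a"
  shows "wiener_x_cov a b = (\<Sum>k=1..a-1. real (m k) * (real (m k) + 1) / (2 * real b)
                                    + real k / real a * (real b - 1 - real (m k)))"
  unfolding wiener_x_cov_def
  using assms by (intro sum.cong refl sum_min_fraction_row) auto

lemma wiener_x_cov_diag:
  assumes "1 \<le> n"
  shows "wiener_x_cov n n = (real n - 1) * (2 * real n - 1) / 6"
proof -
  have n: "real (n - 1) = real n - 1" "real n \<noteq> 0"
    using assms by (auto simp: of_nat_diff)
  have "wiener_x_cov n n = (\<Sum>k=1..n-1. real k * (real k + 1) / (2 * real n)
                                 + real k / real n * (real n - 1 - real k))"
    using assms by (intro wiener_x_cov_eq_sum_rows) auto
  also have "\<dots> = (\<Sum>k=1..n-1. 0 + (2 * real n - 1) / (2 * real n) * real k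
                                 + (- 1 / (2 * real n)) * real k ^ 2)"
    using n
    by (intro sum.cong refl) (simp add: divide_simps; simp add: algebra_simps power2_eq_square)
  also have "\<dots> = (real n - 1) * (2 * real n - 1) / 6"
    unfolding sum_quadratic_atLeast1 using n
    by (simp add: divide_simps; simp add: algebra_simps power2_eq_square)
  finally show ?thesis .
qed

lemma wiener_x_cov_Suc:
  assumes "1 \<le> n"
  shows "wiener_x_cov n (n + 1) = (2 * real n + 1) * (real n - 1) / 6"
proof -
  have n: "real (n - 1) = real n - 1" "real n \<noteq> 0" "real n + 1 \<noteq> 0"
    using assms by (auto simp: of_nat_diff)
  have "wiener_x_cov n (n + 1) = (\<Sum>k=1..n-1. real k * (real k + 1) / (2 * real (n + 1))
                                       + real k / real n * (real (n + 1) - 1 - real k))"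
    using assms by (intro wiener_x_cov_eq_sum_rows) (auto simp: algebra_simps)
  also have "\<dots> = (\<Sum>k=1..n-1. 0 + (1 / (2 * (real n + 1)) + 1) * real k
                                 + (1 / (2 * (real n + 1)) - 1 / real n) * real k ^ 2)"
    using n
    by (intro sum.cong refl) (simp add: divide_simps; simp add: algebra_simps power2_eq_square)
  also have "\<dots> = (2 * real n + 1) * (real n - 1) / 6"
    unfolding sum_quadratic_atLeast1 using n
    by (simp add: divide_simps; simp add: algebra_simps power2_eq_square)
  finally show ?thesis .
qed

lemma wiener_x_cov_double:
  assumes "1 \<le> n"
  shows "wiener_x_cov n (2 * n) = (8 * real n - 1) * (real n - 1) / 12"
proof -
  have n: "real (n - 1) = real n - 1" "real n \<noteq> 0"
    using assms by (auto simp: of_nat_diff)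
  have "wiener_x_cov n (2 * n) =
          (\<Sum>k=1..n-1. real (2 * k) * (real (2 * k) + 1) / (2 * real (2 * n))
                        + real k / real n * (real (2 * n) - 1 - real (2 * k)))"
    using assms by (intro wiener_x_cov_eq_sum_rows) auto
  also have "\<dots> = (\<Sum>k=1..n-1. 0 + (2 - 1 / (2 * real n)) * real k
                                 + (- 1 / real n) * real k ^ 2)"
    using n
    by (intro sum.cong refl) (simp add: divide_simps; simp add: algebra_simps power2_eq_square)
  also have "\<dots> = (8 * real n - 1) * (real n - 1) / 12"
    unfolding sum_quadratic_atLeast1 using n
    by (simp add: divide_simps; simp add: algebra_simps power2_eq_square)
  finally show ?thesis .
qed

lemma wiener_x_cov_double_Suc:
  assumes "1 \<le> n"
  shows "wiener_x_cov n (2 * n + 1) =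
           (real n - 1) * (8 * real n ^ 2 + 7 * real n + 2) / (6 * (2 * real n + 1))"
proof -
  have n: "real (n - 1) = real n - 1" "real n \<noteq> 0" "2 * real n + 1 \<noteq> 0"
    using assms by (auto simp: of_nat_diff)
  have "wiener_x_cov n (2 * n + 1) =
          (\<Sum>k=1..n-1. real (2 * k) * (real (2 * k) + 1) / (2 * real (2 * n + 1))
                        + real k / real n * (real (2 * n + 1) - 1 - real (2 * k)))"
    using assms by (intro wiener_x_cov_eq_sum_rows) (auto simp: algebra_simps)
  also have "\<dots> = (\<Sum>k=1..n-1. 0 + (1 / (2 * real n + 1) + 2) * real k
                                 + (2 / (2 * real n + 1) - 2 / real n) * real k ^ 2)"
    using n
    by (intro sum.cong refl) (simp add: divide_simps; simp add: algebra_simps power2_eq_square)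
  also have "\<dots> = (real n - 1) * (8 * real n ^ 2 + 7 * real n + 2) / (6 * (2 * real n + 1))"
    unfolding sum_quadratic_atLeast1 using n
    by (simp add: divide_simps; simp add: algebra_simps power2_eq_square)
  finally show ?thesis .
qed

lemma wiener_x_cov_double_pred:
  assumes "1 \<le> n"
  shows "wiener_x_cov n (2 * n - 1) = (real n - 1) ^ 2 * (8 * real n - 1) / (6 * (2 * real n - 1))"
proof -
  have n: "real (n - 1) = real n - 1" "real n \<noteq> 0" "2 * real n - 1 \<noteq> 0"
    using assms by (auto simp: of_nat_diff)
  have "wiener_x_cov n (2 * n - 1) =
          (\<Sum>k=1..n-1. real (2 * k - 1) * (real (2 * k - 1) + 1) / (2 * real (2 * n - 1))
                        + real k / real n * (real (2 * n - 1) - 1 - real (2 * k - 1)))"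
    using assms by (intro wiener_x_cov_eq_sum_rows) (auto simp: algebra_simps of_nat_diff)
  also have "\<dots> = (\<Sum>k=1..n-1. 0 + ((2 * real n - 1) / real n - 1 / (2 * real n - 1)) * real k
                                 + (2 / (2 * real n - 1) - 2 / real n) * real k ^ 2)"
    using n by (intro sum.cong refl)
      (auto simp: of_nat_diff divide_simps; simp add: algebra_simps power2_eq_square)
  also have "\<dots> = (real n - 1) ^ 2 * (8 * real n - 1) / (6 * (2 * real n - 1))"
    unfolding sum_quadratic_atLeast1 using n
    by (simp add: divide_simps; simp add: algebra_simps power2_eq_square)
  finally show ?thesis .
qed

lemma wiener_x_cov_odd_double_minus_2:
  assumes "1 \<le> s"
  shows "wiener_x_cov (2 * s + 1) (4 * s) =
           (64 * real s ^ 3 + 28 * real s ^ 2 - 7 * real s - 1) / (12 * (2 * real s + 1))"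
proof -
  define m where "m k = (if k \<le> s then 2 * k - 1 else 2 * k - 2)" for k
  define row where "row k = real (m k) * (real (m k) + 1) / (2 * real (4 * s))
                            + real k / real (2 * s + 1) * (real (4 * s) - 1 - real (m k))" for k
  define \<gamma> where "\<gamma> = 1 / (2 * real s) - 2 / (2 * real s + 1)"
  define low where
    "low k = 0 + (- 1 / (4 * real s) + 4 * real s / (2 * real s + 1)) * real k + \<gamma> * real k ^ 2" for k
  define high where
    "high k = 1 / (4 * real s) + (- 3 / (4 * real s) + (4 * real s + 1) / (2 * real s + 1)) * real k
              + \<gamma> * real k ^ 2" for k
  have s: "real s \<noteq> 0" "2 * real s + 1 \<noteq> 0" using assms by auto
  have "wiener_x_cov (2 * s + 1) (4 * s) = (\<Sum>k=1..2 * s + 1 - 1. row k)"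
    unfolding row_def m_def using assms
    by (intro wiener_x_cov_eq_sum_rows) (auto simp: algebra_simps of_nat_diff)
  also have "\<dots> = (\<Sum>k=1..s. row k) + (\<Sum>k=s+1..s+s. row k)"
    using sum.ub_add_nat[of 1 s row s] by (simp add: mult_2)
  also have "(\<Sum>k=1..s. row k) = (\<Sum>k=1..s. low k)"
    unfolding row_def m_def low_def \<gamma>_def using s
    by (intro sum.cong refl)
      (auto simp: of_nat_diff divide_simps; simp add: algebra_simps power2_eq_square)
  also have "(\<Sum>k=s+1..s+s. row k) = (\<Sum>k=s+1..s+s. high k)"
    unfolding row_def m_def high_def \<gamma>_def using s
    by (intro sum.cong refl)
      (auto simp: of_nat_diff divide_simps; simp add: algebra_simps power2_eq_square)
  also have "\<dots> = (\<Sum>k=1..s+s. high k) - (\<Sum>k=1..s. high k)"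
    using sum.ub_add_nat[of 1 s high s] by simp
  also have "(\<Sum>k=1..s. low k) + ((\<Sum>k=1..s+s. high k) - (\<Sum>k=1..s. high k)) =
               (64 * real s ^ 3 + 28 * real s ^ 2 - 7 * real s - 1) / (12 * (2 * real s + 1))"
    unfolding low_def high_def sum_quadratic_atLeast1 \<gamma>_def using s
    by (simp add: divide_simps; simp add: algebra_simps power2_eq_square power3_eq_cube)
  finally show ?thesis .
qed

lemma standard_wiener_gaussian_sum:
  fixes I :: "'i set"
  assumes W: "standard_wiener M W" and "finite I" and t: "\<And>i. i \<in> I \<Longrightarrow> t i \<in> {0..1}"
  shows "centered_gaussian_rv M (\<lambda>\<omega>. \<Sum>i\<in>I. c i * W (t i) \<omega>)
           (\<Sum>i\<in>I. \<Sum>j\<in>I. c i * c j * min (t i) (t j))"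
proof -
  have gaussian: "\<And>(n :: nat) t c. \<forall>i<n. t i \<in> {0..1} \<Longrightarrow>
      centered_gaussian_rv M (\<lambda>\<omega>. \<Sum>i<n. c i * W (t i) \<omega>)
        (\<Sum>i<n. \<Sum>j<n. c i * c j * min (t i) (t j))"
    using W unfolding standard_wiener_def by auto
  obtain h where h: "bij_betw h {..<card I} I"
    using \<open>finite I\<close> ex_bij_betw_nat_finite lessThan_atLeast0 by metis
  then have "\<forall>i<card I. t (h i) \<in> {0..1}"
    using t by (auto simp: bij_betw_def)
  from gaussian[OF this, of "\<lambda>i. c (h i)"] show ?thesis
    using sum.reindex_bij_betw[OF h, of "\<lambda>i. c i * W (t i) _"]
      sum.reindex_bij_betw[OF h, of "\<lambda>i. \<Sum>j\<in>I. c i * c j * min (t i) (t j)"]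
      sum.reindex_bij_betw[OF h, of "\<lambda>j. c _ * c j * min (t _) (t j)"]
    by simp
qed

lemma standard_wiener_gaussian_x_combination:
  assumes W: "standard_wiener M W" and "finite B"
  shows "centered_gaussian_rv M (\<lambda>\<omega>. \<Sum>n\<in>B. e n * wiener_x W n \<omega>)
           (\<Sum>n\<in>B. \<Sum>n'\<in>B. e n * e n' * wiener_x_cov n n')"
proof -
  define I where "I = Sigma B (\<lambda>n. {1..n-1})"
  define t where "t i = real (snd i) / real (fst i)" for i :: "nat \<times> nat"
  have sum_I: "(\<Sum>i\<in>I. g i) = (\<Sum>n\<in>B. \<Sum>k=1..n-1. g (n, k))" for g :: "nat \<times> nat \<Rightarrow> real"
    unfolding I_def using \<open>finite B\<close> by (subst sum.Sigma) (auto simp: case_prod_beta')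
  have "finite I" unfolding I_def using \<open>finite B\<close> by auto
  moreover have "t i \<in> {0..1}" if "i \<in> I" for i
    using that unfolding I_def t_def by (auto simp: divide_simps)
  ultimately have "centered_gaussian_rv M (\<lambda>\<omega>. \<Sum>i\<in>I. e (fst i) * W (t i) \<omega>)
                     (\<Sum>i\<in>I. \<Sum>j\<in>I. e (fst i) * e (fst j) * min (t i) (t j))"
    by (intro standard_wiener_gaussian_sum[OF W])
  moreover have "(\<Sum>i\<in>I. e (fst i) * W (t i) \<omega>) = (\<Sum>n\<in>B. e n * wiener_x W n \<omega>)" for \<omega>
    unfolding sum_I t_def wiener_x_def by (simp add: sum_distrib_left)
  moreover have "(\<Sum>i\<in>I. \<Sum>j\<in>I. e (fst i) * e (fst j) * min (t i) (t j)) =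
                   (\<Sum>n\<in>B. \<Sum>n'\<in>B. e n * e n' * wiener_x_cov n n')"
    unfolding sum_I t_def wiener_x_cov_def
    by (simp add: sum_distrib_left) (rule sum.cong[OF refl], rule sum.swap)
  ultimately show ?thesis by simp
qed

lemma wiener_y_diff_variance:
  assumes s: "1 \<le> s"
  shows "wiener_x_cov (4 * s + 1) (4 * s + 1) + wiener_x_cov (4 * s) (4 * s)
           + wiener_x_cov (2 * s + 1) (2 * s + 1) + wiener_x_cov (2 * s) (2 * s)
           + 2 * (wiener_x_cov (2 * s) (4 * s + 1) + wiener_x_cov (2 * s + 1) (4 * s)
                  - wiener_x_cov (4 * s) (4 * s + 1) - wiener_x_cov (2 * s + 1) (4 * s + 1)
                  - wiener_x_cov (2 * s) (4 * s) - wiener_x_cov (2 * s) (2 * s + 1))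
         = real s * (4 * real s + 3) / (2 * (2 * real s + 1) * (4 * real s + 1))"
proof -
  have s2: "1 \<le> 2 * s" and s4: "1 \<le> 4 * s" using s by auto
  have diag:
    "wiener_x_cov (4 * s + 1) (4 * s + 1) = (real (4 * s + 1) - 1) * (2 * real (4 * s + 1) - 1) / 6"
    "wiener_x_cov (4 * s) (4 * s) = (real (4 * s) - 1) * (2 * real (4 * s) - 1) / 6"
    "wiener_x_cov (2 * s + 1) (2 * s + 1) = (real (2 * s + 1) - 1) * (2 * real (2 * s + 1) - 1) / 6"
    "wiener_x_cov (2 * s) (2 * s) = (real (2 * s) - 1) * (2 * real (2 * s) - 1) / 6"
    using s by (simp_all add: wiener_x_cov_diag del: of_nat_add of_nat_mult)
  have succ:
    "wiener_x_cov (4 * s) (4 * s + 1) = (2 * real (4 * s) + 1) * (real (4 * s) - 1) / 6"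
    "wiener_x_cov (2 * s) (2 * s + 1) = (2 * real (2 * s) + 1) * (real (2 * s) - 1) / 6"
    using wiener_x_cov_Suc[OF s4] wiener_x_cov_Suc[OF s2] by simp_all
  have double:
    "wiener_x_cov (2 * s) (4 * s) = (8 * real (2 * s) - 1) * (real (2 * s) - 1) / 12"
    "wiener_x_cov (2 * s) (4 * s + 1) =
       (real (2 * s) - 1) * (8 * real (2 * s) ^ 2 + 7 * real (2 * s) + 2) / (6 * (2 * real (2 * s) + 1))"
    "wiener_x_cov (2 * s + 1) (4 * s + 1) =
       (real (2 * s + 1) - 1) ^ 2 * (8 * real (2 * s + 1) - 1) / (6 * (2 * real (2 * s + 1) - 1))"
    using wiener_x_cov_double[OF s2] wiener_x_cov_double_Suc[OF s2] wiener_x_cov_double_pred[of "2 * s + 1"]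
    by simp_all
  have "0 < real s" using s by simp
  then show ?thesis
    unfolding diag succ double wiener_x_cov_odd_double_minus_2[OF s]
    by (simp add: divide_simps) (simp add: algebra_simps power2_eq_square power3_eq_cube)
qed

lemma wiener_y_diff_gaussian:
  assumes W: "standard_wiener M W"
  shows "centered_gaussian_rv M (\<lambda>\<omega>. wiener_y W (4 * s) \<omega> - wiener_y W (2 * s) \<omega>)
           (real s * (4 * real s + 3) / (2 * (2 * real s + 1) * (4 * real s + 1)))"
proof (cases "s = 0")
  case True
  with standard_wiener_gaussian_x_combination[OF W, of "{}"] show ?thesis by simp
next
  case False
  then have "1 \<le> s" by simp
  define B where "B = {4 * s + 1, 4 * s, 2 * s + 1, 2 * s}"
  define e where "e n = (if n \<in> {4 * s, 2 * s + 1} then - 1 else 1 :: real)" for n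
  have "4 * s \<noteq> 2 * s + 1" by presburger
  then have sum_B: "(\<Sum>n\<in>B. f n) = f (4 * s + 1) + f (4 * s) + f (2 * s + 1) + f (2 * s)"
    for f :: "nat \<Rightarrow> real"
    unfolding B_def using False by (simp add: algebra_simps)
  have e: "e (4 * s + 1) = 1" "e (4 * s) = - 1" "e (2 * s + 1) = - 1" "e (2 * s) = 1"
    unfolding e_def using False \<open>4 * s \<noteq> 2 * s + 1\<close> by auto
  have "wiener_y W (4 * s) \<omega> - wiener_y W (2 * s) \<omega> = (\<Sum>n\<in>B. e n * wiener_x W n \<omega>)" for \<omega>
    unfolding sum_B e wiener_y_def by simp
  moreover have "(\<Sum>n\<in>B. \<Sum>n'\<in>B. e n * e n' * wiener_x_cov n n') =
                   real s * (4 * real s + 3) / (2 * (2 * real s + 1) * (4 * real s + 1))"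
    unfolding sum_B e wiener_y_diff_variance[OF \<open>1 \<le> s\<close>, symmetric]
    using wiener_x_cov_commute[of "4 * s + 1" "4 * s"] wiener_x_cov_commute[of "4 * s + 1" "2 * s + 1"]
      wiener_x_cov_commute[of "4 * s + 1" "2 * s"] wiener_x_cov_commute[of "4 * s" "2 * s + 1"]
      wiener_x_cov_commute[of "4 * s" "2 * s"] wiener_x_cov_commute[of "2 * s + 1" "2 * s"]
    by simp
  ultimately show ?thesis
    using standard_wiener_gaussian_x_combination[OF W, of B e] unfolding B_def by simp
qed

lemma integral_normal_density_scale:
  fixes f :: "real \<Rightarrow> real"
  assumes "0 < \<sigma>" and f: "f \<in> borel_measurable borel"
  shows "integral\<^sup>L (density lborel (\<lambda>x. ennreal (normal_density 0 \<sigma> x))) f =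
         integral\<^sup>L std_normal_distribution (\<lambda>x. f (\<sigma> * x))"
proof -
  interpret N: prob_space std_normal_distribution
    by (rule prob_space_normal_density) simp
  have "distributed std_normal_distribution lborel (\<lambda>x. x) std_normal_density"
    unfolding distributed_def by (auto simp: distr_id2)
  from N.normal_density_affine[OF this, of \<sigma> 0] \<open>0 < \<sigma>\<close>
  have "distr std_normal_distribution lborel (\<lambda>x. \<sigma> * x) =
          density lborel (\<lambda>x. ennreal (normal_density 0 \<sigma> x))"
    unfolding distributed_def by simp
  moreover have "integral\<^sup>L (distr std_normal_distribution lborel (\<lambda>x. \<sigma> * x)) f =
                   integral\<^sup>L std_normal_distribution (\<lambda>x. f (\<sigma> * x))"
    using f by (intro integral_distr) auto
  ultimately show ?thesis by simp
qed

lemma integral_centered_gaussian: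
  fixes f :: "real \<Rightarrow> real"
  assumes X: "centered_gaussian_rv M X v" and f: "f \<in> borel_measurable borel"
  shows "integral\<^sup>L (distr M borel X) f = integral\<^sup>L std_normal_distribution (\<lambda>x. f (sqrt v * x))"
proof -
  interpret N: prob_space std_normal_distribution
    by (rule prob_space_normal_density) simp
  show ?thesis
  proof (cases "v = 0")
    case True
    with X show ?thesis
      unfolding centered_gaussian_rv_def by (simp add: integral_return f N.prob_space[simplified])
  next
    case False
    with X show ?thesis
      unfolding centered_gaussian_rv_def by (simp add: integral_normal_density_scale f)
  qed
qed

lemma real_distribution_centered_gaussian:
  assumes "centered_gaussian_rv M X v"
  shows "real_distribution (distr M borel X)"
  using assms prob_space_normal_density[of "sqrt v" 0] prob_space_return[of 0 borel]
  unfolding centered_gaussian_rv_def real_distribution_def real_distribution_axioms_def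
  by auto

lemma weak_conv_centered_gaussian:
  assumes X: "\<And>n. centered_gaussian_rv (M n) (X n) (v n)"
    and v: "v \<longlonglongrightarrow> v\<^sub>0" and "0 < v\<^sub>0"
  shows "weak_conv_m (\<lambda>n. distr (M n) borel (X n))
           (density lborel (\<lambda>x. ennreal (normal_density 0 (sqrt v\<^sub>0) x)))"
proof (rule integral_bdd_continuous_conv_imp_weak_conv)
  show "real_distribution (distr (M n) borel (X n))" for n
    using X by (rule real_distribution_centered_gaussian)
  show "real_distribution (density lborel (\<lambda>x. ennreal (normal_density 0 (sqrt v\<^sub>0) x)))"
    using \<open>0 < v\<^sub>0\<close> prob_space_normal_density[of "sqrt v\<^sub>0" 0]
    unfolding real_distribution_def real_distribution_axioms_def by auto
  interpret N: prob_space std_normal_distribution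
    by (rule prob_space_normal_density) simp
  fix f :: "real \<Rightarrow> real"
  assume cont: "\<And>x. isCont f x" and bounded: "\<And>x. \<bar>f x\<bar> \<le> 1"
  have f: "f \<in> borel_measurable borel"
    using cont by (intro borel_measurable_continuous_onI) (simp add: continuous_at_imp_continuous_on)
  have "(\<lambda>n. integral\<^sup>L std_normal_distribution (\<lambda>x. f (sqrt (v n) * x)))
          \<longlonglongrightarrow> integral\<^sup>L std_normal_distribution (\<lambda>x. f (sqrt v\<^sub>0 * x))"
  proof (rule integral_dominated_convergence[where w = "\<lambda>_. 1"])
    show "AE x in std_normal_distribution. (\<lambda>n. f (sqrt (v n) * x)) \<longlonglongrightarrow> f (sqrt v\<^sub>0 * x)"
      using v by (intro AE_I2 isCont_tendsto_compose[OF cont] tendsto_mult_right tendsto_real_sqrt)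
  qed (use f bounded in auto)
  then show "(\<lambda>n. integral\<^sup>L (distr (M n) borel (X n)) f)
               \<longlonglongrightarrow> integral\<^sup>L (density lborel (\<lambda>x. ennreal (normal_density 0 (sqrt v\<^sub>0) x))) f"
    using \<open>0 < v\<^sub>0\<close>
    by (simp add: integral_centered_gaussian[OF X f] integral_normal_density_scale f)
qed

theorem lemma1:
  fixes M :: "'a measure" and W :: "real \<Rightarrow> 'a \<Rightarrow> real"
  assumes "standard_wiener M W"
  shows "weak_conv_m (\<lambda>s. distr M borel (\<lambda>\<omega>. wiener_y W (4 * s) \<omega> - wiener_y W (2 * s) \<omega>))
           (density lborel (\<lambda>x. ennreal (normal_density 0 (1/2) x)))"
proof -
  have "(\<lambda>s. real s * (4 * real s + 3) / (2 * (2 * real s + 1) * (4 * real s + 1))) \<longlonglongrightarrow> 1 / 4"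
    by real_asymp
  from weak_conv_centered_gaussian[OF wiener_y_diff_gaussian[OF assms] this] show ?thesis
    by (simp add: real_sqrt_divide)
qed

end
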